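(* Let $L$ be a finite-dimensional simple Lie algebra over a field $F$ such that every proper subalgebra of $L$ is triangulable on $L$. Then: (1) if $M$ is a maximal subalgebra of $L$, then either $M$ is abelian and no non-zero element of $M$ acts nilpotently on $L$, or $\mathrm{nil}(M)$ is a non-zero maximal nil subalgebra of $L$; (2) if $K$ is a non-zero maximal nil subalgebra of $L$, then the normalizer $N_L(K)$ of $K$ in $L$ is a maximal subalgebra of $L$; (3) for any two different maximal subalgebras $M_1,M_2$ of $L$, no non-zero element of $M_1\cap M_2$ acts nilpotently on $L$ (in particular, $M_1\cap M_2$ is abelian); (4) $L$ is two-generated.
   Context: A subalgebra $S$ of $L$ is triangulable on $L$ if $\mathrm{ad}_L S=\{\mathrm{ad}_L x\mid x\in S\}$ is a Lie algebra of linear transformations of $L$ which is simultaneously triangulable over the algebraic closure of $F$ (equivalently, every element of $S^2$ acts nilpotently on $L$). An element $x$ acts nilpotently on $L$ if $\mathrm{ad}_L x$ is nilpotent. A subalgebra is nil on $L$ if all its elements act nilpotently on $L$; a maximal nil subalgebra is a subalgebra nil on $L$ which is maximal (under inclusion) among subalgebras nil on $L$. For a subalgebra $S$, $\mathrm{nil}(S)$ is the unique maximal ideal of $S$ consisting of elements acting nilpotently on $L$. A Lie algebra is two-generated if it is generated as a Lie algebra by two of its elements. *)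

theory Defs
  imports Main "HOL.Vector_Spaces"
begin

text \<open>A Lie algebra L is modelled as the whole type 'v, a vector space over the
field 'f (scalar multiplication scale), with Lie bracket br.\<close>

definition lie_algebra :: "('f::field \<Rightarrow> 'v::ab_group_add \<Rightarrow> 'v) \<Rightarrow> ('v \<Rightarrow> 'v \<Rightarrow> 'v) \<Rightarrow> bool" where
  "lie_algebra scale br \<longleftrightarrow> vector_space scale
     \<and> (\<forall>x y z. br (x + y) z = br x z + br y z)
     \<and> (\<forall>x y z. br x (y + z) = br x y + br x z)
     \<and> (\<forall>c x y. br (scale c x) y = scale c (br x y))
     \<and> (\<forall>c x y. br x (scale c y) = scale c (br x y))
     \<and> (\<forall>x. br x x = 0)
     \<and> (\<forall>x y z. br x (br y z) + br y (br z x) + br z (br x y) = 0)"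

definition fin_dim :: "('f::field \<Rightarrow> 'v::ab_group_add \<Rightarrow> 'v) \<Rightarrow> bool" where
  "fin_dim scale \<longleftrightarrow> (\<exists>B. finite B \<and> module.span scale B = UNIV)"

definition lie_subalgebra :: "('f::field \<Rightarrow> 'v::ab_group_add \<Rightarrow> 'v) \<Rightarrow> ('v \<Rightarrow> 'v \<Rightarrow> 'v) \<Rightarrow> 'v set \<Rightarrow> bool" where
  "lie_subalgebra scale br S \<longleftrightarrow> module.subspace scale S \<and> (\<forall>x\<in>S. \<forall>y\<in>S. br x y \<in> S)"

definition lie_ideal :: "('f::field \<Rightarrow> 'v::ab_group_add \<Rightarrow> 'v) \<Rightarrow> ('v \<Rightarrow> 'v \<Rightarrow> 'v) \<Rightarrow> 'v set \<Rightarrow> 'v set \<Rightarrow> bool" where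
  "lie_ideal scale br S I \<longleftrightarrow> I \<subseteq> S \<and> module.subspace scale I \<and> (\<forall>x\<in>S. \<forall>y\<in>I. br x y \<in> I)"

definition simple_lie :: "('f::field \<Rightarrow> 'v::ab_group_add \<Rightarrow> 'v) \<Rightarrow> ('v \<Rightarrow> 'v \<Rightarrow> 'v) \<Rightarrow> bool" where
  "simple_lie scale br \<longleftrightarrow> (\<exists>x y. br x y \<noteq> 0)
     \<and> (\<forall>I. lie_ideal scale br UNIV I \<longrightarrow> I = {0} \<or> I = UNIV)"

definition abelian :: "('v::ab_group_add \<Rightarrow> 'v \<Rightarrow> 'v) \<Rightarrow> 'v set \<Rightarrow> bool" where
  "abelian br S \<longleftrightarrow> (\<forall>x\<in>S. \<forall>y\<in>S. br x y = 0)"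

definition acts_nilp :: "('v::ab_group_add \<Rightarrow> 'v \<Rightarrow> 'v) \<Rightarrow> 'v \<Rightarrow> bool" where
  "acts_nilp br x \<longleftrightarrow> (\<exists>n. \<forall>y. (br x ^^ n) y = 0)"

definition nil_on :: "('v::ab_group_add \<Rightarrow> 'v \<Rightarrow> 'v) \<Rightarrow> 'v set \<Rightarrow> bool" where
  "nil_on br S \<longleftrightarrow> (\<forall>x\<in>S. acts_nilp br x)"

definition derived :: "('f::field \<Rightarrow> 'v::ab_group_add \<Rightarrow> 'v) \<Rightarrow> ('v \<Rightarrow> 'v \<Rightarrow> 'v) \<Rightarrow> 'v set \<Rightarrow> 'v set" where
  "derived scale br S = module.span scale {br x y | x y. x \<in> S \<and> y \<in> S}"

definition triangulable :: "('f::field \<Rightarrow> 'v::ab_group_add \<Rightarrow> 'v) \<Rightarrow> ('v \<Rightarrow> 'v \<Rightarrow> 'v) \<Rightarrow> 'v set \<Rightarrow> bool" where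
  "triangulable scale br S \<longleftrightarrow> (\<forall>x\<in>derived scale br S. acts_nilp br x)"

definition maximal_subalgebra :: "('f::field \<Rightarrow> 'v::ab_group_add \<Rightarrow> 'v) \<Rightarrow> ('v \<Rightarrow> 'v \<Rightarrow> 'v) \<Rightarrow> 'v set \<Rightarrow> bool" where
  "maximal_subalgebra scale br M \<longleftrightarrow> lie_subalgebra scale br M \<and> M \<noteq> UNIV
     \<and> (\<forall>N. lie_subalgebra scale br N \<and> M \<subseteq> N \<longrightarrow> N = M \<or> N = UNIV)"

definition maximal_nil_subalgebra :: "('f::field \<Rightarrow> 'v::ab_group_add \<Rightarrow> 'v) \<Rightarrow> ('v \<Rightarrow> 'v \<Rightarrow> 'v) \<Rightarrow> 'v set \<Rightarrow> bool" where
  "maximal_nil_subalgebra scale br K \<longleftrightarrow> lie_subalgebra scale br K \<and> nil_on br K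
     \<and> (\<forall>N. lie_subalgebra scale br N \<and> nil_on br N \<and> K \<subseteq> N \<longrightarrow> N = K)"

definition nil_rad :: "('f::field \<Rightarrow> 'v::ab_group_add \<Rightarrow> 'v) \<Rightarrow> ('v \<Rightarrow> 'v \<Rightarrow> 'v) \<Rightarrow> 'v set \<Rightarrow> 'v set" where
  "nil_rad scale br S = (THE I. lie_ideal scale br S I \<and> nil_on br I
     \<and> (\<forall>J. lie_ideal scale br S J \<and> nil_on br J \<longrightarrow> J \<subseteq> I))"

definition normalizer :: "('v::ab_group_add \<Rightarrow> 'v \<Rightarrow> 'v) \<Rightarrow> 'v set \<Rightarrow> 'v set" where
  "normalizer br K = {x. \<forall>k\<in>K. br x k \<in> K}"

definition gen_subalgebra :: "('f::field \<Rightarrow> 'v::ab_group_add \<Rightarrow> 'v) \<Rightarrow> ('v \<Rightarrow> 'v \<Rightarrow> 'v) \<Rightarrow> 'v set \<Rightarrow> 'v set" where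
  "gen_subalgebra scale br X = \<Inter>{S. lie_subalgebra scale br S \<and> X \<subseteq> S}"

definition two_generated :: "('f::field \<Rightarrow> 'v::ab_group_add \<Rightarrow> 'v) \<Rightarrow> ('v \<Rightarrow> 'v \<Rightarrow> 'v) \<Rightarrow> bool" where
  "two_generated scale br \<longleftrightarrow> (\<exists>a b. gen_subalgebra scale br {a, b} = UNIV)"

end

theory Submission
  imports Defs
begin

text \<open>
  The engine is Engel's theorem in a relative form: a nil subalgebra I kills a nonzero vector in
  every nonzero I-invariant subquotient of L. Consequently a nil subalgebra properly contained in
  another subalgebra N is properly contained in its normalizer within N, and the sum of two nil
  subalgebras, one normalizing the other, is again nil.

  For a proper subalgebra M of L, triangulability makes [M, M] nil, so nil(M) consists of all
  elements of M acting nilpotently on L. If M is maximal and nil(M) \<noteq> 0, simplicity of L forces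
  N(nil(M)) = M, and the normalizer growth then shows that nil(M) is a maximal nil subalgebra;
  this gives (1) and (2). For (3), choose two different maximal subalgebras sharing a nonzero
  nilpotent element with dim(nil(M1) \<inter> nil(M2)) as large as possible; a maximal subalgebra
  containing the normalizer of I = nil(M1) \<inter> nil(M2) would have to coincide with both M1 and
  M2. Finally every nonzero x, nilpotent if possible, lies in a unique maximal subalgebra M (by
  (3), or because all maximal subalgebras are then abelian and the centralizer of x is proper),
  so x together with any y \<notin> M generates L.
\<close>

lemma lie_ideal_imp_subalgebra: "lie_ideal scale br S J \<Longrightarrow> lie_subalgebra scale br J"
  unfolding lie_ideal_def lie_subalgebra_def by blast

lemma maximal_subalgebraD:
  assumes "maximal_subalgebra scale br M"
  shows "lie_subalgebra scale br M" "M \<noteq> UNIV"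
  using assms unfolding maximal_subalgebra_def by auto

lemma nil_on_subset: "nil_on br T \<Longrightarrow> S \<subseteq> T \<Longrightarrow> nil_on br S"
  unfolding nil_on_def by blast

locale fd_lie_algebra = finite_dimensional_vector_space scale Basis
  for scale :: "'f::field \<Rightarrow> 'v::ab_group_add \<Rightarrow> 'v" and Basis +
  fixes br :: "'v \<Rightarrow> 'v \<Rightarrow> 'v"
  assumes bracket_add_left: "br (x + y) z = br x z + br y z"
    and bracket_add_right: "br x (y + z) = br x y + br x z"
    and bracket_scale_left: "br (scale c x) y = scale c (br x y)"
    and bracket_scale_right: "br x (scale c y) = scale c (br x y)"
    and bracket_self: "br x x = 0"
    and jacobi: "br x (br y z) + br y (br z x) + br z (br x y) = 0"
begin

lemma bracket_zero_left [simp]: "br 0 y = 0"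
  using bracket_add_left[of 0 0 y] by simp

lemma bracket_zero_right [simp]: "br y 0 = 0"
  using bracket_add_right[of y 0 0] by simp

lemma bracket_skew: "br x y = - br y x"
proof -
  have "br (x + y) (x + y) = br x x + br x y + (br y x + br y y)"
    by (simp add: bracket_add_left bracket_add_right add.assoc)
  then have "br x y + br y x = 0" by (simp add: bracket_self)
  then show ?thesis by (simp add: eq_neg_iff_add_eq_0)
qed

lemma bracket_neg_right: "br y (- x) = - br y x"
  using bracket_add_right[of y x "- x"] by (simp add: eq_neg_iff_add_eq_0 add.commute)

lemma bracket_derivation: "br h (br a u) = br (br h a) u + br a (br h u)"
proof -
  have "br h (br a u) + br a (br u h) + br u (br h a) = 0" by (rule jacobi)
  moreover have "br a (br u h) = - br a (br h u)" by (metis bracket_skew bracket_neg_right)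
  moreover have "br u (br h a) = - br (br h a) u" by (rule bracket_skew)
  ultimately show ?thesis by (simp add: algebra_simps eq_neg_iff_add_eq_0)
qed

lemma bracket_swap_mem: "subspace W \<Longrightarrow> br x y \<in> W \<Longrightarrow> br y x \<in> W"
  by (metis bracket_skew subspace_neg)

lemma subspace_bracket_preimage_left: "subspace W \<Longrightarrow> subspace {x. br x u \<in> W}"
  by (rule subspaceI) (auto simp: bracket_add_left bracket_scale_left subspace_0 subspace_add subspace_scale)

lemma subspace_bracket_preimage_right: "subspace W \<Longrightarrow> subspace {x. br u x \<in> W}"
  by (rule subspaceI) (auto simp: bracket_add_right bracket_scale_right subspace_0 subspace_add subspace_scale)

lemma bracket_span_mem:
  assumes "\<And>x y. x \<in> X \<Longrightarrow> y \<in> Y \<Longrightarrow> br x y \<in> W" "subspace W" "x \<in> span X" "y \<in> span Y"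
  shows "br x y \<in> W"
proof -
  have "br x' y \<in> W" if "x' \<in> X" for x'
    using span_induct[OF assms(4), of "\<lambda>y. br x' y \<in> W"]
      subspace_bracket_preimage_right[OF assms(2), of x'] assms(1) that by auto
  then show ?thesis
    using span_induct[OF assms(3), of "\<lambda>x. br x y \<in> W"]
      subspace_bracket_preimage_left[OF assms(2), of y] by auto
qed

lemma acts_nilp_scale: "acts_nilp br x \<Longrightarrow> acts_nilp br (scale c x)"
proof -
  have "(br (scale c x) ^^ n) y = scale (c ^ n) ((br x ^^ n) y)" for n y
    by (induction n) (auto simp: bracket_scale_left bracket_scale_right)
  then show "acts_nilp br x \<Longrightarrow> ?thesis" unfolding acts_nilp_def by auto
qed

lemma acts_nilp_zero: "acts_nilp br 0"
  unfolding acts_nilp_def by (rule exI[of _ 1]) simp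

lemma nil_on_span_singleton: "acts_nilp br x \<Longrightarrow> nil_on br (span {x})"
  unfolding nil_on_def span_singleton using acts_nilp_scale by auto

lemma exists_max_dim: "P X \<Longrightarrow> \<exists>Y. P Y \<and> (\<forall>Z. P Z \<longrightarrow> dim Z \<le> dim Y)"
  using ex_has_greatest_nat[of P X dim "Suc dimension"] dim_subset_UNIV by (simp add: le_imp_less_Suc)

lemma dim_psubset_subspace: "subspace S \<Longrightarrow> subspace T \<Longrightarrow> S \<subset> T \<Longrightarrow> dim S < dim T"
  using dim_psubset[of S T] by (simp add: span_eq_iff[THEN iffD2])

lemma lie_subalgebra_zero: "lie_subalgebra scale br {0}"
  unfolding lie_subalgebra_def by simp

lemma lie_subalgebra_UNIV: "lie_subalgebra scale br UNIV"
  unfolding lie_subalgebra_def by simp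

lemma lie_subalgebra_subspace: "lie_subalgebra scale br S \<Longrightarrow> subspace S"
  unfolding lie_subalgebra_def by blast

lemma lie_subalgebra_bracket: "lie_subalgebra scale br S \<Longrightarrow> x \<in> S \<Longrightarrow> y \<in> S \<Longrightarrow> br x y \<in> S"
  unfolding lie_subalgebra_def by blast

lemma lie_subalgebra_inter:
  "lie_subalgebra scale br A \<Longrightarrow> lie_subalgebra scale br B \<Longrightarrow> lie_subalgebra scale br (A \<inter> B)"
  unfolding lie_subalgebra_def by (auto intro: subspace_inter)

lemma lie_subalgebra_span_singleton: "lie_subalgebra scale br (span {x})"
  unfolding lie_subalgebra_def
  by (auto intro: bracket_span_mem[of "{x}" "{x}"] simp: bracket_self span_zero)

lemma lie_subalgebra_sum:
  assumes I: "lie_subalgebra scale br I" and K: "lie_subalgebra scale br K"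
    and normal: "\<forall>k\<in>K. \<forall>i\<in>I. br k i \<in> I"
  shows "lie_subalgebra scale br {i + k | i k. i \<in> I \<and> k \<in> K}"
proof -
  have Is: "subspace I" using I by (rule lie_subalgebra_subspace)
  have "br (i + k) (i' + k') \<in> {i + k | i k. i \<in> I \<and> k \<in> K}"
    if "i \<in> I" "k \<in> K" "i' \<in> I" "k' \<in> K" for i k i' k'
  proof -
    have "br i i' + br i k' + br k i' \<in> I"
      using that I normal bracket_swap_mem[OF Is] by (meson lie_subalgebra_bracket Is subspace_add)
    moreover have "br (i + k) (i' + k') = (br i i' + br i k' + br k i') + br k k'"
      by (simp add: bracket_add_left bracket_add_right algebra_simps)
    moreover have "br k k' \<in> K" using lie_subalgebra_bracket[OF K] that by blast
    ultimately show ?thesis by blast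
  qed
  then show ?thesis
    using subspace_sums[OF Is lie_subalgebra_subspace[OF K]] unfolding lie_subalgebra_def by blast
qed

section \<open>Engel's theorem\<close>

definition stabilizes :: "'v set \<Rightarrow> 'v set \<Rightarrow> bool" where
  "stabilizes S W \<longleftrightarrow> (\<forall>s\<in>S. \<forall>w\<in>W. br s w \<in> W)"

text \<open>S kills a nonzero vector of every nonzero S-invariant subquotient U/W of L. For subalgebras
  this is equivalent to being nil on L: one direction is Engel's theorem.\<close>

definition engel_property :: "'v set \<Rightarrow> bool" where
  "engel_property S \<longleftrightarrow> (\<forall>W U. subspace W \<longrightarrow> subspace U \<longrightarrow> W \<subset> U
      \<longrightarrow> stabilizes S U \<longrightarrow> stabilizes S W \<longrightarrow> (\<exists>u\<in>U - W. \<forall>s\<in>S. br s u \<in> W))"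

lemma engel_propertyD:
  assumes "engel_property S" "subspace W" "subspace U" "W \<subset> U" "stabilizes S U" "stabilizes S W"
  obtains u where "u \<in> U" "u \<notin> W" "\<And>s. s \<in> S \<Longrightarrow> br s u \<in> W"
  using assms(1)[unfolded engel_property_def, rule_format, OF assms(2-6)] that by blast

lemma stabilizes_subset: "stabilizes T W \<Longrightarrow> S \<subseteq> T \<Longrightarrow> stabilizes S W"
  unfolding stabilizes_def by blast

lemma stabilizes_subalgebra: "lie_subalgebra scale br N \<Longrightarrow> S \<subseteq> N \<Longrightarrow> stabilizes S N"
  unfolding stabilizes_def lie_subalgebra_def by blast

lemma engel_property_span_singleton:
  assumes "acts_nilp br a"
  shows "engel_property (span {a})"
  unfolding engel_property_def
proof (intro allI impI)
  fix W U assume W: "subspace W" and U: "subspace U" and WU: "W \<subset> U"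
    and stab_U: "stabilizes (span {a}) U" and "stabilizes (span {a}) W"
  obtain u0 where u0: "u0 \<in> U" "u0 \<notin> W" using WU by blast
  obtain n where "(br a ^^ n) u0 = 0" using assms unfolding acts_nilp_def by blast
  then have "(br a ^^ n) u0 \<in> W" using subspace_0[OF W] by simp
  define m where "m = (LEAST m. (br a ^^ m) u0 \<in> W)"
  have in_W: "(br a ^^ m) u0 \<in> W" unfolding m_def by (rule LeastI) fact
  then obtain k where m: "m = Suc k" using u0(2) by (cases m) auto
  have "(br a ^^ k) u0 \<notin> W"
    using not_less_Least[of k "\<lambda>m. (br a ^^ m) u0 \<in> W"] m unfolding m_def by simp
  moreover have "(br a ^^ k) u0 \<in> U"
    using stab_U u0(1) span_base[of a "{a}"] unfolding stabilizes_def by (induction k) auto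
  moreover have "br s ((br a ^^ k) u0) \<in> W" if s: "s \<in> span {a}" for s
  proof -
    obtain c where "s = scale c a" using s unfolding span_singleton by blast
    then show ?thesis using in_W m subspace_scale[OF W] by (simp add: bracket_scale_left)
  qed
  ultimately show "\<exists>u\<in>U - W. \<forall>s\<in>span {a}. br s u \<in> W" by blast
qed

lemma engel_property_sum:
  assumes I: "subspace I" "engel_property I" and K: "subspace K" "engel_property K"
    and normal: "\<forall>k\<in>K. \<forall>i\<in>I. br k i \<in> I"
  shows "engel_property {i + k | i k. i \<in> I \<and> k \<in> K}"
  unfolding engel_property_def
proof (intro allI impI)
  let ?T = "{i + k | i k. i \<in> I \<and> k \<in> K}"
  fix W U assume W: "subspace W" and U: "subspace U" and WU: "W \<subset> U"
    and stab_U: "stabilizes ?T U" and stab_W: "stabilizes ?T W"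
  have I_T: "I \<subseteq> ?T" using subspace_0[OF K(1)] by force
  have K_T: "K \<subseteq> ?T" using subspace_0[OF I(1)] by force
  note I_U = stabilizes_subset[OF stab_U I_T] and I_W = stabilizes_subset[OF stab_W I_T]
    and K_U = stabilizes_subset[OF stab_U K_T] and K_W = stabilizes_subset[OF stab_W K_T]
  \<comment> \<open>The vectors killed by I modulo W form a K-stable subspace, since K normalizes I.\<close>
  define U0 where "U0 = {u \<in> U. \<forall>i\<in>I. br i u \<in> W}"
  have U0: "subspace U0" unfolding U0_def
    by (rule subspaceI)
      (auto simp: bracket_add_right bracket_scale_right subspace_0 subspace_add subspace_scale W U)
  obtain u1 where "u1 \<in> U" "u1 \<notin> W" "\<And>i. i \<in> I \<Longrightarrow> br i u1 \<in> W"
    using engel_propertyD[OF I(2) W U WU I_U I_W] by blast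
  then have W_U0: "W \<subset> U0" using I_W WU unfolding U0_def stabilizes_def by auto
  have "stabilizes K U0" unfolding stabilizes_def
  proof (intro ballI)
    fix k u assume k: "k \<in> K" and u: "u \<in> U0"
    have "br i (br k u) \<in> W" if i: "i \<in> I" for i
    proof -
      have "br i k \<in> I" using bracket_swap_mem[OF I(1)] normal k i by blast
      then have "br (br i k) u \<in> W" using u unfolding U0_def by blast
      moreover have "br k (br i u) \<in> W" using K_W k i u unfolding U0_def stabilizes_def by auto
      ultimately show ?thesis using bracket_derivation[of i k u] subspace_add[OF W] by simp
    qed
    moreover have "br k u \<in> U" using K_U k u unfolding U0_def stabilizes_def by auto
    ultimately show "br k u \<in> U0" unfolding U0_def by auto
  qed
  then obtain u where u: "u \<in> U0" "u \<notin> W" "\<And>k. k \<in> K \<Longrightarrow> br k u \<in> W"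
    using engel_propertyD[OF K(2) W U0 W_U0 _ K_W] by blast
  have "br t u \<in> W" if "t \<in> ?T" for t
    using that u subspace_add[OF W] unfolding U0_def by (auto simp: bracket_add_left)
  then show "\<exists>u\<in>U - W. \<forall>t\<in>?T. br t u \<in> W" using u unfolding U0_def by auto
qed

lemma engel_property_normalizer_grows:
  assumes I: "lie_subalgebra scale br I" "engel_property I"
    and N: "lie_subalgebra scale br N" and IN: "I \<subset> N"
  obtains a where "a \<in> N" "a \<notin> I" "a \<in> normalizer br I"
proof -
  have I_sub: "subspace I" using I(1) by (rule lie_subalgebra_subspace)
  have "stabilizes I N" "stabilizes I I"
    using stabilizes_subalgebra[OF N] stabilizes_subalgebra[OF I(1)] IN by auto
  then obtain a where "a \<in> N" "a \<notin> I" "\<And>i. i \<in> I \<Longrightarrow> br i a \<in> I"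
    using engel_propertyD[OF I(2) I_sub lie_subalgebra_subspace[OF N] IN] by blast
  moreover have "a \<in> normalizer br I"
    using calculation(3) bracket_swap_mem[OF I_sub] unfolding normalizer_def by blast
  ultimately show thesis using that by blast
qed

theorem nil_on_imp_engel_property:
  "lie_subalgebra scale br K \<Longrightarrow> nil_on br K \<Longrightarrow> engel_property K"
proof (induction "dim K" arbitrary: K rule: less_induct)
  case less
  have K_sub: "subspace K" using less.prems(1) by (rule lie_subalgebra_subspace)
  show ?case
  proof (cases "K = {0}")
    case True
    show ?thesis unfolding engel_property_def
    proof (intro allI impI)
      fix W U :: "'v set" assume "subspace W" "W \<subset> U"
      then obtain u where "u \<in> U - W" by blast
      then show "\<exists>u\<in>U - W. \<forall>s\<in>K. br s u \<in> W" using True subspace_0[OF \<open>subspace W\<close>] by auto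
    qed
  next
    case False
    let ?P = "\<lambda>H. lie_subalgebra scale br H \<and> H \<subset> K"
    have "?P {0}" using False lie_subalgebra_zero subspace_0[OF K_sub] by auto
    then obtain H where H: "?P H" and H_max: "\<And>Z. ?P Z \<Longrightarrow> dim Z \<le> dim H"
      using exists_max_dim[of ?P] by meson
    have H_sub: "subspace H" using H lie_subalgebra_subspace by blast
    have "dim H < dim K" using dim_psubset_subspace H_sub K_sub H by blast
    moreover have "nil_on br H" using nil_on_subset[OF less.prems(2)] H by blast
    ultimately have H_engel: "engel_property H" using less.hyps[of H] H by blast
    obtain a where a: "a \<in> K" "a \<notin> H" "a \<in> normalizer br H"
      by (rule engel_property_normalizer_grows[OF conjunct1[OF H] H_engel less.prems(1) conjunct2[OF H]])
    let ?T = "{h + k | h k. h \<in> H \<and> k \<in> span {a}}"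
    have a_normal: "\<forall>k\<in>span {a}. \<forall>h\<in>H. br k h \<in> H"
      using a(3) subspace_scale[OF H_sub]
      unfolding normalizer_def span_singleton by (auto simp: bracket_scale_left)
    then have T: "lie_subalgebra scale br ?T"
      using lie_subalgebra_sum[OF conjunct1[OF H] lie_subalgebra_span_singleton] by blast
    have "span {a} \<subseteq> K" using a(1) K_sub by (simp add: span_minimal)
    then have "?T \<subseteq> K" using H by (auto intro: subspace_add[OF K_sub])
    moreover have "H \<subset> ?T"
    proof -
      have "H \<subseteq> ?T" using span_zero[of "{a}"] by force
      moreover have "a \<in> ?T" using subspace_0[OF H_sub] span_base[of a "{a}"] by force
      ultimately show ?thesis using a(2) by blast
    qed
    then have "dim H < dim ?T" using dim_psubset_subspace H_sub lie_subalgebra_subspace[OF T] by blast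
    ultimately have "?T = K" using H_max[of ?T] T by (meson not_le psubsetI)
    moreover have "acts_nilp br a" using less.prems(2) a(1) unfolding nil_on_def by blast
    then have "engel_property ?T"
      by (rule engel_property_sum[OF H_sub H_engel subspace_span engel_property_span_singleton a_normal])
    ultimately show ?thesis by simp
  qed
qed

lemma engel_property_nilpotent_modulo:
  assumes S: "engel_property S" and s: "s \<in> S"
  shows "subspace W \<Longrightarrow> stabilizes S W \<Longrightarrow> \<exists>n. \<forall>v. (br s ^^ n) v \<in> W"
proof (induction "dimension - dim W" arbitrary: W rule: less_induct)
  case less
  show ?case
  proof (cases "W = UNIV")
    case False
    then have W_UNIV: "W \<subset> UNIV" by blast
    have S_UNIV: "stabilizes S UNIV" unfolding stabilizes_def by blast
    obtain u where "u \<in> UNIV" and u: "u \<notin> W" "\<And>t. t \<in> S \<Longrightarrow> br t u \<in> W"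
      using engel_propertyD[OF S less.prems(1) subspace_UNIV W_UNIV S_UNIV less.prems(2)] by blast
    let ?W' = "span (insert u W)"
    have into_W: "br t w \<in> W" if "t \<in> S" "w \<in> ?W'" for t w
    proof -
      have "\<forall>x\<in>insert u W. br t x \<in> W" using u that less.prems unfolding stabilizes_def by auto
      then show ?thesis
        using span_induct[of w "insert u W" "\<lambda>x. br t x \<in> W"]
          subspace_bracket_preimage_right[OF less.prems(1), of t] that by auto
    qed
    have "stabilizes S ?W'" using into_W span_superset[of "insert u W"] unfolding stabilizes_def by blast
    moreover have "W \<subset> ?W'" using u span_superset[of "insert u W"] by auto
    then have "dim W < dim ?W'" using dim_psubset_subspace less.prems(1) subspace_span by blast
    then have "dimension - dim ?W' < dimension - dim W" using dim_subset_UNIV[of ?W'] by linarith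
    ultimately obtain n where "\<forall>v. (br s ^^ n) v \<in> ?W'"
      using less.hyps[of ?W'] subspace_span by blast
    then have "\<forall>v. (br s ^^ Suc n) v \<in> W" using into_W[OF s] by simp
    then show ?thesis by blast
  qed simp
qed

lemma engel_property_imp_nil_on:
  assumes "engel_property S"
  shows "nil_on br S"
  unfolding nil_on_def acts_nilp_def
proof
  fix s assume "s \<in> S"
  moreover have "stabilizes S {0}" unfolding stabilizes_def by simp
  ultimately obtain n where "\<forall>v. (br s ^^ n) v \<in> {0}"
    using engel_property_nilpotent_modulo[OF assms _ subspace_single_0] by blast
  then show "\<exists>n. \<forall>y. (br s ^^ n) y = 0" by blast
qed

lemma nil_on_sum:
  assumes "lie_subalgebra scale br I" "nil_on br I" "lie_subalgebra scale br K" "nil_on br K"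
    and "\<forall>k\<in>K. \<forall>i\<in>I. br k i \<in> I"
  shows "nil_on br {i + k | i k. i \<in> I \<and> k \<in> K}"
proof -
  have "engel_property I" "engel_property K" using assms nil_on_imp_engel_property by blast+
  then show ?thesis
    using engel_property_sum[OF lie_subalgebra_subspace[OF assms(1)] _
        lie_subalgebra_subspace[OF assms(3)] _ assms(5)]
    by (blast intro: engel_property_imp_nil_on)
qed

lemma nil_normalizer_grows:
  assumes "lie_subalgebra scale br I" "nil_on br I" "lie_subalgebra scale br N" "I \<subset> N"
  obtains a where "a \<in> N" "a \<notin> I" "a \<in> normalizer br I"
  using engel_property_normalizer_grows[OF assms(1) nil_on_imp_engel_property[OF assms(1,2)] assms(3,4)]
  by blast

section \<open>The nil radical, normalizers and maximal subalgebras\<close>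

lemma lie_ideal_sum:
  assumes S: "subspace S" and I: "lie_ideal scale br S I" and J: "lie_ideal scale br S J"
  shows "lie_ideal scale br S {i + j | i j. i \<in> I \<and> j \<in> J}"
proof -
  let ?T = "{i + j | i j. i \<in> I \<and> j \<in> J}"
  have I_sub: "subspace I" "I \<subseteq> S" and I_br: "\<And>x y. x \<in> S \<Longrightarrow> y \<in> I \<Longrightarrow> br x y \<in> I"
    using I unfolding lie_ideal_def by auto
  have J_sub: "subspace J" "J \<subseteq> S" and J_br: "\<And>x y. x \<in> S \<Longrightarrow> y \<in> J \<Longrightarrow> br x y \<in> J"
    using J unfolding lie_ideal_def by auto
  have "?T \<subseteq> S" using I_sub J_sub subspace_add[OF S] by blast
  moreover have "br x t \<in> ?T" if "x \<in> S" "t \<in> ?T" for x t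
  proof -
    obtain i j where "t = i + j" "i \<in> I" "j \<in> J" using \<open>t \<in> ?T\<close> by blast
    then have "br x t = br x i + br x j" "br x i \<in> I" "br x j \<in> J"
      using I_br J_br \<open>x \<in> S\<close> by (auto simp: bracket_add_right)
    then show ?thesis by blast
  qed
  ultimately show ?thesis unfolding lie_ideal_def using subspace_sums[OF I_sub(1) J_sub(1)] by blast
qed

lemma nil_rad_spec:
  assumes S: "lie_subalgebra scale br S"
  shows "lie_ideal scale br S (nil_rad scale br S) \<and> nil_on br (nil_rad scale br S)
    \<and> (\<forall>J. lie_ideal scale br S J \<and> nil_on br J \<longrightarrow> J \<subseteq> nil_rad scale br S)"
proof -
  let ?P = "\<lambda>J. lie_ideal scale br S J \<and> nil_on br J"
  have S_sub: "subspace S" using S by (rule lie_subalgebra_subspace)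
  have "?P {0}"
    using subspace_0[OF S_sub] acts_nilp_zero unfolding lie_ideal_def nil_on_def by auto
  then obtain R where R: "?P R" and R_max: "\<And>J. ?P J \<Longrightarrow> dim J \<le> dim R"
    using exists_max_dim[of ?P] by meson
  have R_sub: "subspace R" using R unfolding lie_ideal_def by blast
  \<comment> \<open>A sum of two nil ideals is a nil ideal, so a nil ideal of maximal dimension contains every
    nil ideal; this is what makes the definite description in nil_rad meaningful.\<close>
  have greatest: "J \<subseteq> R" if J: "?P J" for J
  proof -
    let ?T = "{r + j | r j. r \<in> R \<and> j \<in> J}"
    have J_sub: "subspace J" using J unfolding lie_ideal_def by blast
    have T_ideal: "lie_ideal scale br S ?T" using lie_ideal_sum[OF S_sub] R J by blast
    have "\<forall>j\<in>J. \<forall>r\<in>R. br j r \<in> R" using R J unfolding lie_ideal_def by blast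
    then have "nil_on br ?T"
      using nil_on_sum lie_ideal_imp_subalgebra R J by blast
    then have "dim ?T \<le> dim R" using R_max[of ?T] T_ideal by blast
    moreover have "R \<subseteq> ?T" "J \<subseteq> ?T" using subspace_0[OF J_sub] subspace_0[OF R_sub] by force+
    ultimately have "R = ?T"
      using subspace_dim_equal[OF R_sub subspace_sums[OF R_sub J_sub]] by blast
    with \<open>J \<subseteq> ?T\<close> show ?thesis by simp
  qed
  have "nil_rad scale br S = R"
    unfolding nil_rad_def by (rule the_equality) (use R greatest in blast)+
  then show ?thesis using R greatest by simp
qed

lemma nil_rad_ideal: "lie_subalgebra scale br S \<Longrightarrow> lie_ideal scale br S (nil_rad scale br S)"
  using nil_rad_spec by blast

lemma nil_rad_nil_on: "lie_subalgebra scale br S \<Longrightarrow> nil_on br (nil_rad scale br S)"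
  using nil_rad_spec by blast

lemma nil_ideal_subset_nil_rad:
  "lie_subalgebra scale br S \<Longrightarrow> lie_ideal scale br S J \<Longrightarrow> nil_on br J \<Longrightarrow> J \<subseteq> nil_rad scale br S"
  using nil_rad_spec by blast

lemma nil_rad_subalgebra: "lie_subalgebra scale br S \<Longrightarrow> lie_subalgebra scale br (nil_rad scale br S)"
  using nil_rad_ideal lie_ideal_imp_subalgebra by blast

lemma nil_rad_subset: "lie_subalgebra scale br S \<Longrightarrow> nil_rad scale br S \<subseteq> S"
  using nil_rad_ideal unfolding lie_ideal_def by blast

lemma bracket_mem_derived: "x \<in> M \<Longrightarrow> y \<in> M \<Longrightarrow> br x y \<in> derived scale br M"
  unfolding derived_def by (rule span_base) blast

lemma derived_ideal:
  assumes M: "lie_subalgebra scale br M"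
  shows "lie_ideal scale br M (derived scale br M)"
proof -
  have "{br x y | x y. x \<in> M \<and> y \<in> M} \<subseteq> M" using M unfolding lie_subalgebra_def by blast
  then have "derived scale br M \<subseteq> M"
    unfolding derived_def using span_minimal lie_subalgebra_subspace[OF M] by blast
  then show ?thesis
    unfolding lie_ideal_def derived_def using bracket_mem_derived[unfolded derived_def] by auto
qed

lemma exists_maximal_subalgebra:
  assumes S: "lie_subalgebra scale br S" "S \<noteq> UNIV"
  obtains M where "maximal_subalgebra scale br M" "S \<subseteq> M"
proof -
  let ?P = "\<lambda>M. lie_subalgebra scale br M \<and> M \<noteq> UNIV \<and> S \<subseteq> M"
  obtain M where M: "?P M" and M_max: "\<And>Z. ?P Z \<Longrightarrow> dim Z \<le> dim M"
    using exists_max_dim[of ?P S] S by (meson order_refl)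
  have "N = M \<or> N = UNIV" if N: "lie_subalgebra scale br N" "M \<subseteq> N" for N
  proof (cases "N = UNIV")
    case False
    then have "dim N \<le> dim M" using M_max[of N] M N by blast
    then show ?thesis
      using subspace_dim_equal[of M N] M N lie_subalgebra_subspace by blast
  qed simp
  then have "maximal_subalgebra scale br M" unfolding maximal_subalgebra_def using M by blast
  then show thesis using that M by blast
qed

lemma normalizer_subalgebra:
  assumes K: "lie_subalgebra scale br K"
  shows "lie_subalgebra scale br (normalizer br K)"
proof -
  have K_sub: "subspace K" using K by (rule lie_subalgebra_subspace)
  have "subspace (normalizer br K)" unfolding normalizer_def
    by (rule subspaceI)
      (auto simp: bracket_add_left bracket_scale_left subspace_0[OF K_sub] subspace_add[OF K_sub]
        subspace_scale[OF K_sub])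
  moreover have "br x y \<in> normalizer br K" if "x \<in> normalizer br K" "y \<in> normalizer br K" for x y
    unfolding normalizer_def
  proof (intro CollectI ballI)
    fix k assume "k \<in> K"
    then have "br x (br y k) \<in> K" "br y (br x k) \<in> K" using that unfolding normalizer_def by auto
    moreover have "br (br x y) k = br x (br y k) - br y (br x k)" using bracket_derivation[of x y k] by simp
    ultimately show "br (br x y) k \<in> K" using subspace_diff[OF K_sub] by simp
  qed
  ultimately show ?thesis unfolding lie_subalgebra_def by blast
qed

lemma subset_normalizer: "lie_subalgebra scale br K \<Longrightarrow> K \<subseteq> normalizer br K"
  unfolding lie_subalgebra_def normalizer_def by blast

lemma lie_subalgebra_centralizer: "lie_subalgebra scale br {z. br x z = 0}"
proof -
  have "br a b \<in> {z. br x z = 0}" if "br x a = 0" "br x b = 0" for a b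
    using that bracket_derivation[of x a b] by simp
  then show ?thesis
    unfolding lie_subalgebra_def using subspace_bracket_preimage_right[OF subspace_single_0, of x] by auto
qed

lemma gen_subalgebra_subalgebra: "lie_subalgebra scale br (gen_subalgebra scale br X)"
proof -
  let ?F = "{S. lie_subalgebra scale br S \<and> X \<subseteq> S}"
  have "subspace (\<Inter>?F)" by (rule subspace_Inter) (auto simp: lie_subalgebra_def)
  then show ?thesis unfolding gen_subalgebra_def lie_subalgebra_def by blast
qed

lemma gen_subalgebra_superset: "X \<subseteq> gen_subalgebra scale br X"
  unfolding gen_subalgebra_def by blast

lemma two_generated_if_unique_maximal:
  assumes M: "maximal_subalgebra scale br M" and "x \<in> M"
    and unique: "\<And>M'. maximal_subalgebra scale br M' \<Longrightarrow> x \<in> M' \<Longrightarrow> M' = M"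
  shows "two_generated scale br"
proof -
  obtain y where "y \<notin> M" using maximal_subalgebraD(2)[OF M] by blast
  have "gen_subalgebra scale br {x, y} = UNIV"
  proof (rule ccontr)
    assume "gen_subalgebra scale br {x, y} \<noteq> UNIV"
    then obtain M' where M': "maximal_subalgebra scale br M'" "gen_subalgebra scale br {x, y} \<subseteq> M'"
      using exists_maximal_subalgebra gen_subalgebra_subalgebra by blast
    then have "x \<in> M'" "y \<in> M'" using gen_subalgebra_superset by blast+
    then show False using unique[OF M'(1)] \<open>y \<notin> M\<close> by blast
  qed
  then show ?thesis unfolding two_generated_def by blast
qed

end

locale simple_fd_lie_algebra = fd_lie_algebra scale Basis br
  for scale :: "'f::field \<Rightarrow> 'v::ab_group_add \<Rightarrow> 'v" and Basis and br +
  assumes simple: "simple_lie scale br"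
begin

lemma exists_bracket_nonzero: "\<exists>x y. br x y \<noteq> 0"
  using simple unfolding simple_lie_def by blast

lemma lie_ideal_trivial: "lie_ideal scale br UNIV I \<Longrightarrow> I = {0} \<or> I = UNIV"
  using simple unfolding simple_lie_def by blast

lemma span_singleton_ne_UNIV: "span {x} \<noteq> UNIV"
proof
  assume span_x: "span {x} = UNIV"
  have "br a b \<in> {0}" for a b
    by (rule bracket_span_mem[of "{x}" "{x}"]) (simp_all add: bracket_self span_x)
  then show False using exists_bracket_nonzero by auto
qed

lemma not_nil_on_UNIV: "\<not> nil_on br UNIV"
proof
  assume "nil_on br UNIV"
  then have engel: "engel_property UNIV" using nil_on_imp_engel_property lie_subalgebra_UNIV by blast
  have nonzero: "{0} \<subset> (UNIV :: 'v set)" using exists_bracket_nonzero by auto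
  have "stabilizes UNIV UNIV" "stabilizes UNIV {0}" unfolding stabilizes_def by auto
  then obtain u where "u \<in> UNIV" "u \<notin> {0}" "\<And>s. s \<in> UNIV \<Longrightarrow> br s u \<in> {0}"
    using engel_propertyD[OF engel subspace_single_0 subspace_UNIV nonzero] by blast
  then have u: "u \<noteq> 0" "\<And>s. br s u = 0" by auto
  \<comment> \<open>u is a nonzero central element, but the centre is an ideal and L is not abelian.\<close>
  let ?Z = "{z. \<forall>w. br w z = 0}"
  have "subspace ?Z" by (rule subspaceI) (auto simp: bracket_add_right bracket_scale_right)
  then have "lie_ideal scale br UNIV ?Z" unfolding lie_ideal_def by simp
  then have "?Z = UNIV" using lie_ideal_trivial u by blast
  then show False using exists_bracket_nonzero by auto
qed

lemma nil_on_ne_UNIV: "nil_on br K \<Longrightarrow> K \<noteq> UNIV"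
  using not_nil_on_UNIV by blast

lemma normalizer_ne_UNIV:
  assumes "subspace K" "K \<noteq> {0}" "K \<noteq> UNIV"
  shows "normalizer br K \<noteq> UNIV"
proof
  assume "normalizer br K = UNIV"
  then have "lie_ideal scale br UNIV K" using assms(1) unfolding lie_ideal_def normalizer_def by blast
  then show False using lie_ideal_trivial assms(2,3) by blast
qed

lemma centralizer_ne_UNIV:
  assumes "x \<noteq> 0"
  shows "{z. br x z = 0} \<noteq> UNIV"
proof
  assume "{z. br x z = 0} = UNIV"
  then have "br w x = 0" for w using bracket_skew[of w x] by auto
  then have "br w y \<in> span {x}" if "y \<in> span {x}" for w y
    using that span_zero unfolding span_singleton by (auto simp: bracket_scale_right)
  then have "lie_ideal scale br UNIV (span {x})" unfolding lie_ideal_def by simp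
  then show False
    using lie_ideal_trivial span_singleton_ne_UNIV span_base[of x "{x}"] assms by blast
qed

end

section \<open>Simple Lie algebras whose proper subalgebras are triangulable\<close>

locale simple_lie_proper_triangulable = simple_fd_lie_algebra scale Basis br
  for scale :: "'f::field \<Rightarrow> 'v::ab_group_add \<Rightarrow> 'v" and Basis and br +
  assumes proper_triangulable:
    "lie_subalgebra scale br S \<Longrightarrow> S \<noteq> UNIV \<Longrightarrow> triangulable scale br S"
begin

lemma derived_subset_nil_rad:
  assumes "lie_subalgebra scale br M" "M \<noteq> UNIV"
  shows "derived scale br M \<subseteq> nil_rad scale br M"
proof -
  have "nil_on br (derived scale br M)"
    using proper_triangulable[OF assms] unfolding triangulable_def nil_on_def by blast
  then show ?thesis using nil_ideal_subset_nil_rad[OF assms(1) derived_ideal[OF assms(1)]] by blast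
qed

lemma nil_rad_eq:
  assumes M: "lie_subalgebra scale br M" "M \<noteq> UNIV"
  shows "nil_rad scale br M = {x \<in> M. acts_nilp br x}"
proof
  show "nil_rad scale br M \<subseteq> {x \<in> M. acts_nilp br x}"
    using nil_rad_subset[OF M(1)] nil_rad_nil_on[OF M(1)] unfolding nil_on_def by blast
next
  let ?R = "nil_rad scale br M"
  have R_sub: "subspace ?R" by (rule lie_subalgebra_subspace[OF nil_rad_subalgebra[OF M(1)]])
  show "{x \<in> M. acts_nilp br x} \<subseteq> ?R"
  proof safe
    fix x assume x: "x \<in> M" "acts_nilp br x"
    have x_M: "span {x} \<subseteq> M" using span_minimal[of "{x}" M] x lie_subalgebra_subspace[OF M(1)] by blast
    let ?J = "{r + k | r k. r \<in> ?R \<and> k \<in> span {x}}"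
    have J_M: "?J \<subseteq> M" using nil_rad_subset[OF M(1)] x_M subspace_add[OF lie_subalgebra_subspace[OF M(1)]] by blast
    \<comment> \<open>Any subspace between nil(M) and M is an ideal of M, because [M, M] \<subseteq> nil(M).\<close>
    have "br a b \<in> ?J" if "a \<in> M" "b \<in> ?J" for a b
    proof -
      have "br a b \<in> ?R" using bracket_mem_derived[of a M b] derived_subset_nil_rad[OF M] that J_M by blast
      then show ?thesis using span_zero[of "{x}"] by force
    qed
    then have "lie_ideal scale br M ?J"
      unfolding lie_ideal_def using subspace_sums[OF R_sub subspace_span] J_M by blast
    moreover have "\<forall>k\<in>span {x}. \<forall>r\<in>?R. br k r \<in> ?R"
      using nil_rad_ideal[OF M(1)] x_M unfolding lie_ideal_def by blast
    then have "nil_on br ?J"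
      by (rule nil_on_sum[OF nil_rad_subalgebra[OF M(1)] nil_rad_nil_on[OF M(1)]
            lie_subalgebra_span_singleton nil_on_span_singleton[OF x(2)]])
    ultimately have "?J \<subseteq> ?R" using nil_ideal_subset_nil_rad[OF M(1)] by blast
    moreover have "x \<in> ?J" using subspace_0[OF R_sub] span_base[of x "{x}"] by force
    ultimately show "x \<in> ?R" by blast
  qed
qed

lemma bracket_acts_nilp:
  assumes "lie_subalgebra scale br M" "M \<noteq> UNIV" "x \<in> M" "y \<in> M"
  shows "acts_nilp br (br x y)"
proof -
  have "br x y \<in> nil_rad scale br M"
    using bracket_mem_derived[OF assms(3,4)] derived_subset_nil_rad[OF assms(1,2)] by blast
  then show ?thesis using nil_rad_eq[OF assms(1,2)] by simp
qed

lemma nil_rad_subspace: "maximal_subalgebra scale br M \<Longrightarrow> subspace (nil_rad scale br M)"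
  by (rule lie_subalgebra_subspace[OF nil_rad_subalgebra[OF maximal_subalgebraD(1)]])

lemma mem_nil_rad_maximal_iff:
  "maximal_subalgebra scale br M \<Longrightarrow> x \<in> nil_rad scale br M \<longleftrightarrow> x \<in> M \<and> acts_nilp br x"
  by (simp add: nil_rad_eq maximal_subalgebraD)

lemma normalizer_nil_rad:
  assumes M: "maximal_subalgebra scale br M" and R: "nil_rad scale br M \<noteq> {0}"
  shows "normalizer br (nil_rad scale br M) = M"
proof -
  note M_sub = maximal_subalgebraD[OF M]
  let ?R = "nil_rad scale br M"
  have "M \<subseteq> normalizer br ?R" using nil_rad_ideal[OF M_sub(1)] unfolding lie_ideal_def normalizer_def by blast
  moreover have "?R \<noteq> UNIV" using nil_rad_subset[OF M_sub(1)] M_sub(2) by blast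
  then have "normalizer br ?R \<noteq> UNIV" by (rule normalizer_ne_UNIV[OF nil_rad_subspace[OF M] R])
  ultimately show ?thesis
    using M normalizer_subalgebra[OF nil_rad_subalgebra[OF M_sub(1)]]
    unfolding maximal_subalgebra_def by blast
qed

lemma maximal_nil_subalgebra_nil_rad:
  assumes M: "maximal_subalgebra scale br M" and R: "nil_rad scale br M \<noteq> {0}"
  shows "maximal_nil_subalgebra scale br (nil_rad scale br M)"
  unfolding maximal_nil_subalgebra_def
proof (intro conjI allI impI)
  let ?R = "nil_rad scale br M"
  note M_sub = maximal_subalgebraD(1)[OF M]
  show R_sub: "lie_subalgebra scale br ?R" and R_nil: "nil_on br ?R"
    using nil_rad_subalgebra[OF M_sub] nil_rad_nil_on[OF M_sub] .
  fix N assume N: "lie_subalgebra scale br N \<and> nil_on br N \<and> ?R \<subseteq> N"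
  show "N = ?R"
  proof (rule ccontr)
    assume "N \<noteq> ?R"
    then obtain a where "a \<in> N" "a \<notin> ?R" "a \<in> normalizer br ?R"
      using nil_normalizer_grows[OF R_sub R_nil] N by blast
    moreover have "a \<in> M" using calculation(3) normalizer_nil_rad[OF M R] by blast
    ultimately show False using N mem_nil_rad_maximal_iff[OF M] unfolding nil_on_def by blast
  qed
qed

lemma maximal_subalgebra_dichotomy:
  assumes M: "maximal_subalgebra scale br M"
  shows "(abelian br M \<and> (\<forall>x\<in>M. x \<noteq> 0 \<longrightarrow> \<not> acts_nilp br x))
    \<or> (nil_rad scale br M \<noteq> {0} \<and> maximal_nil_subalgebra scale br (nil_rad scale br M))"
proof (cases "nil_rad scale br M = {0}")
  case True
  then have no_nilp: "\<forall>x\<in>M. x \<noteq> 0 \<longrightarrow> \<not> acts_nilp br x" using mem_nil_rad_maximal_iff[OF M] by blast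
  then have "abelian br M"
    using bracket_acts_nilp[OF maximal_subalgebraD[OF M]] lie_subalgebra_bracket[OF maximal_subalgebraD(1)[OF M]]
    unfolding abelian_def by blast
  with no_nilp show ?thesis by blast
next
  case False
  then show ?thesis using maximal_nil_subalgebra_nil_rad[OF M] by blast
qed

lemma maximal_subalgebra_above_nil_subalgebra:
  assumes I: "lie_subalgebra scale br I" "nil_on br I" "I \<noteq> {0}"
  obtains M where "maximal_subalgebra scale br M" "normalizer br I \<subseteq> M" "I \<subseteq> nil_rad scale br M"
proof -
  have "normalizer br I \<noteq> UNIV"
    using normalizer_ne_UNIV[OF lie_subalgebra_subspace[OF I(1)] I(3) nil_on_ne_UNIV[OF I(2)]] .
  then obtain M where M: "maximal_subalgebra scale br M" "normalizer br I \<subseteq> M"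
    using exists_maximal_subalgebra normalizer_subalgebra[OF I(1)] by blast
  moreover have "I \<subseteq> nil_rad scale br M"
    using M subset_normalizer[OF I(1)] I(2) mem_nil_rad_maximal_iff[OF M(1)] unfolding nil_on_def by blast
  ultimately show thesis using that by blast
qed

lemma normalizer_maximal_nil_subalgebra:
  assumes K: "maximal_nil_subalgebra scale br K" and K0: "K \<noteq> {0}"
  shows "maximal_subalgebra scale br (normalizer br K)"
proof -
  have K_sub: "lie_subalgebra scale br K" and K_nil: "nil_on br K"
    and K_max: "\<And>N. lie_subalgebra scale br N \<Longrightarrow> nil_on br N \<Longrightarrow> K \<subseteq> N \<Longrightarrow> N = K"
    using K unfolding maximal_nil_subalgebra_def by auto
  obtain M where M: "maximal_subalgebra scale br M" "normalizer br K \<subseteq> M" "K \<subseteq> nil_rad scale br M"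
    using maximal_subalgebra_above_nil_subalgebra[OF K_sub K_nil K0] .
  note M_sub = maximal_subalgebraD(1)[OF M(1)]
  have "nil_rad scale br M = K"
    using K_max[OF nil_rad_subalgebra[OF M_sub] nil_rad_nil_on[OF M_sub] M(3)] .
  then show ?thesis using normalizer_nil_rad[OF M(1)] K0 M(1) by simp
qed

lemma nil_rad_subset_imp_eq:
  assumes A: "maximal_subalgebra scale br A" and B: "maximal_subalgebra scale br B"
    and A0: "nil_rad scale br A \<noteq> {0}" and AB: "nil_rad scale br A \<subseteq> nil_rad scale br B"
  shows "A = B"
proof -
  note B_sub = maximal_subalgebraD(1)[OF B]
  have eq: "nil_rad scale br B = nil_rad scale br A"
    using maximal_nil_subalgebra_nil_rad[OF A A0] AB nil_rad_subalgebra[OF B_sub] nil_rad_nil_on[OF B_sub]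
    unfolding maximal_nil_subalgebra_def by blast
  then have "nil_rad scale br B \<noteq> {0}" using A0 by simp
  then show ?thesis using normalizer_nil_rad[OF A A0] normalizer_nil_rad[OF B] eq by simp
qed

lemma maximal_subalgebras_no_common_nilpotent:
  assumes "maximal_subalgebra scale br A" "maximal_subalgebra scale br B" "A \<noteq> B"
    and "x \<in> A" "x \<in> B" "acts_nilp br x"
  shows "x = 0"
  using assms
proof (induction "dimension - dim (nil_rad scale br A \<inter> nil_rad scale br B)" arbitrary: A B
    rule: less_induct)
  case less
  let ?I = "nil_rad scale br A \<inter> nil_rad scale br B"
  note mem_nil = mem_nil_rad_maximal_iff
  show ?case
  proof (rule ccontr)
    assume "x \<noteq> 0"
    have x_I: "x \<in> ?I" using mem_nil[OF less.prems(1)] mem_nil[OF less.prems(2)] less.prems(4-6) by blast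
    have I_sub: "lie_subalgebra scale br ?I"
      using lie_subalgebra_inter nil_rad_subalgebra maximal_subalgebraD(1)[OF less.prems(1)]
        maximal_subalgebraD(1)[OF less.prems(2)] by blast
    have I_nil: "nil_on br ?I" using mem_nil[OF less.prems(1)] unfolding nil_on_def by blast
    have I_subspace: "subspace ?I"
      using subspace_inter[OF nil_rad_subspace[OF less.prems(1)] nil_rad_subspace[OF less.prems(2)]] .
    have I0: "?I \<noteq> {0}" using x_I \<open>x \<noteq> 0\<close> by blast
    have "?I \<noteq> nil_rad scale br A"
      using nil_rad_subset_imp_eq[OF less.prems(1,2)] less.prems(3) x_I \<open>x \<noteq> 0\<close> by blast
    then have I_A: "?I \<subset> nil_rad scale br A" by blast
    have "?I \<noteq> nil_rad scale br B"
      using nil_rad_subset_imp_eq[OF less.prems(2,1)] less.prems(3) x_I \<open>x \<noteq> 0\<close> by blast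
    then have I_B: "?I \<subset> nil_rad scale br B" by blast
    obtain M0 where M0: "maximal_subalgebra scale br M0" "normalizer br ?I \<subseteq> M0"
        and I_M0: "?I \<subseteq> nil_rad scale br M0"
      using maximal_subalgebra_above_nil_subalgebra[OF I_sub I_nil I0] .
    \<comment> \<open>Normalizer growth makes nil(M0) \<inter> nil(M) strictly larger than I, so the pair (M0, M)
      is covered by the induction hypothesis on the codimension.\<close>
    have eq_M0: "M = M0" if M: "maximal_subalgebra scale br M" and I_M: "?I \<subset> nil_rad scale br M" for M
    proof (rule ccontr)
      assume "M \<noteq> M0"
      obtain a where a: "a \<in> nil_rad scale br M" "a \<notin> ?I" "a \<in> normalizer br ?I"
        using nil_normalizer_grows[OF I_sub I_nil nil_rad_subalgebra[OF maximal_subalgebraD(1)[OF M]] I_M] .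
      have "a \<in> nil_rad scale br M0" using a M0 mem_nil[OF M] mem_nil[OF M0(1)] by blast
      then have "?I \<subset> nil_rad scale br M0 \<inter> nil_rad scale br M" using I_M0 I_M a by blast
      then have "dim ?I < dim (nil_rad scale br M0 \<inter> nil_rad scale br M)"
        by (rule dim_psubset_subspace[OF I_subspace
              subspace_inter[OF nil_rad_subspace[OF M0(1)] nil_rad_subspace[OF M]]])
      then have "dimension - dim (nil_rad scale br M0 \<inter> nil_rad scale br M) < dimension - dim ?I"
        using dim_subset_UNIV[of "nil_rad scale br M0 \<inter> nil_rad scale br M"] by linarith
      moreover have "x \<in> M0" "x \<in> M" using x_I I_M0 I_M mem_nil[OF M0(1)] mem_nil[OF M] by blast+
      moreover have "M0 \<noteq> M" using \<open>M \<noteq> M0\<close> by simp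
      ultimately have "x = 0" using less.hyps[OF _ M0(1) M] less.prems(6) by blast
      with \<open>x \<noteq> 0\<close> show False ..
    qed
    show False using eq_M0[OF less.prems(1) I_A] eq_M0[OF less.prems(2) I_B] less.prems(3) by simp
  qed
qed

lemma inter_maximal_subalgebras_abelian:
  assumes M1: "maximal_subalgebra scale br M1" and M2: "maximal_subalgebra scale br M2" and "M1 \<noteq> M2"
  shows "abelian br (M1 \<inter> M2)"
  unfolding abelian_def
proof (intro ballI)
  fix x y assume "x \<in> M1 \<inter> M2" "y \<in> M1 \<inter> M2"
  then have "br x y \<in> M1 \<inter> M2" "acts_nilp br (br x y)"
    using lie_subalgebra_bracket[OF maximal_subalgebraD(1)[OF M1]]
      lie_subalgebra_bracket[OF maximal_subalgebraD(1)[OF M2]] bracket_acts_nilp[OF maximal_subalgebraD[OF M1]]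
    by blast+
  then show "br x y = 0" using maximal_subalgebras_no_common_nilpotent[OF M1 M2 \<open>M1 \<noteq> M2\<close>] by blast
qed

lemma unique_maximal_if_no_nilpotent:
  assumes no_nilp: "\<And>z. acts_nilp br z \<Longrightarrow> z = 0"
    and M: "maximal_subalgebra scale br M" and M': "maximal_subalgebra scale br M'"
    and "x \<in> M" "x \<in> M'" "x \<noteq> 0"
  shows "M = M'"
proof -
  let ?C = "{z. br x z = 0}"
  \<comment> \<open>Without nonzero nilpotent elements all maximal subalgebras are abelian, so both lie in the
    centralizer of x, which is a proper subalgebra.\<close>
  have "?C = N" if N: "maximal_subalgebra scale br N" "x \<in> N" for N
  proof -
    have "N \<subseteq> ?C" using no_nilp bracket_acts_nilp[OF maximal_subalgebraD[OF N(1)]] N(2) by blast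
    then show ?thesis
      using N(1) lie_subalgebra_centralizer centralizer_ne_UNIV[OF \<open>x \<noteq> 0\<close>]
      unfolding maximal_subalgebra_def by blast
  qed
  then show ?thesis using M M' \<open>x \<in> M\<close> \<open>x \<in> M'\<close> by metis
qed

lemma two_generated: "two_generated scale br"
proof -
  obtain x where x: "x \<noteq> 0" and x_nilp: "(\<exists>z. z \<noteq> 0 \<and> acts_nilp br z) \<Longrightarrow> acts_nilp br x"
    using exists_bracket_nonzero by (metis bracket_zero_left)
  obtain M where M: "maximal_subalgebra scale br M" "span {x} \<subseteq> M"
    using exists_maximal_subalgebra[OF lie_subalgebra_span_singleton span_singleton_ne_UNIV] by blast
  have "x \<in> M" using M(2) span_base[of x "{x}"] by blast
  moreover have "M' = M" if M': "maximal_subalgebra scale br M'" "x \<in> M'" for M'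
  proof (cases "\<exists>z. z \<noteq> 0 \<and> acts_nilp br z")
    case True
    then show ?thesis
      using maximal_subalgebras_no_common_nilpotent[OF M(1) M'(1)] x x_nilp \<open>x \<in> M\<close> M'(2) by blast
  next
    case False
    then show ?thesis using unique_maximal_if_no_nilpotent[OF _ M'(1) M(1)] x \<open>x \<in> M\<close> M'(2) by blast
  qed
  ultimately show ?thesis using two_generated_if_unique_maximal[OF M(1)] by blast
qed

end

lemma fin_dim_imp_finite_basis:
  assumes "vector_space scale" "fin_dim scale"
  obtains B where "finite_dimensional_vector_space scale B"
proof -
  interpret vector_space scale by fact
  obtain B0 where B0: "finite B0" "span B0 = UNIV" using assms(2) unfolding fin_dim_def by blast
  obtain B where B: "independent B" "UNIV \<subseteq> span B" using basis_exists[of UNIV] by blast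
  have "finite B" using independent_span_bound[OF B0(1) B(1)] B0(2) by blast
  then have "finite_dimensional_vector_space scale B"
    using B by unfold_locales auto
  then show thesis by (rule that)
qed

theorem theorem4p4:
  fixes scale :: "'f::field \<Rightarrow> 'v::ab_group_add \<Rightarrow> 'v"
    and br :: "'v \<Rightarrow> 'v \<Rightarrow> 'v"
  assumes "lie_algebra scale br"
    and "fin_dim scale"
    and "simple_lie scale br"
    and "\<forall>S. lie_subalgebra scale br S \<and> S \<noteq> UNIV \<longrightarrow> triangulable scale br S"
  shows "(\<forall>M. maximal_subalgebra scale br M \<longrightarrow>
            (abelian br M \<and> (\<forall>x\<in>M. x \<noteq> 0 \<longrightarrow> \<not> acts_nilp br x))
            \<or> (nil_rad scale br M \<noteq> {0} \<and> maximal_nil_subalgebra scale br (nil_rad scale br M)))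
       \<and> (\<forall>K. maximal_nil_subalgebra scale br K \<and> K \<noteq> {0} \<longrightarrow>
            maximal_subalgebra scale br (normalizer br K))
       \<and> (\<forall>M1 M2. maximal_subalgebra scale br M1 \<and> maximal_subalgebra scale br M2 \<and> M1 \<noteq> M2 \<longrightarrow>
            (\<forall>x\<in>M1 \<inter> M2. x \<noteq> 0 \<longrightarrow> \<not> acts_nilp br x) \<and> abelian br (M1 \<inter> M2))
       \<and> two_generated scale br"
proof -
  have "vector_space scale" using assms(1) unfolding lie_algebra_def by blast
  then obtain B where "finite_dimensional_vector_space scale B"
    using assms(2) fin_dim_imp_finite_basis by blast
  then interpret finite_dimensional_vector_space scale B .
  interpret simple_lie_proper_triangulable scale B br
    by unfold_locales (use assms in \<open>auto simp: lie_algebra_def\<close>)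
  show ?thesis
    by (auto simp: maximal_subalgebra_dichotomy two_generated
        intro: normalizer_maximal_nil_subalgebra inter_maximal_subalgebras_abelian
        dest: maximal_subalgebras_no_common_nilpotent)
qed

end
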